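(* Let $A$ be an infinite set, $\mathcal{L}\in V(\Omega(A))$, $I,J$ sets, $f:A^{I}\to A^{J}$ uniformly continuous, $\alpha:I\to\mathcal{L}$, $\beta:J\to\mathcal{L}$ with $\beta=\overline{f}^{\mathcal{L}}(\alpha)$. Then $\iota_{\beta,\alpha}\circ\iota_{\beta}=\iota_{\alpha}\circ f^{\beta,\alpha}$ as maps $\mathbf{F}(A,J)/Z_{\beta}\to\langle\alpha''(I)\rangle$.
   Context: For each $a\in A$ let $\hat{a}$ be a constant symbol, and for each $n\geq1$ and each $h:A^{n}\to A$ let $\hat{h}$ be an $n$-ary operation symbol. $\Omega(A)$ is the algebra with universe $A$ interpreting $\hat{a}$ as $a$ and $\hat{h}$ as $h$; $V(\Omega(A))$ is the variety it generates. For $h:X\to Y$, $\Pi(h)$ is the partition of $X$ into nonempty fibers; for a partition $P$ of $Y$, $[h]_{-1}(P)=\{h^{-1}(R):R\in P\}\setminus\{\emptyset\}$. For $i_{1},\dots,i_{n}\in I$, $\mathcal{P}_{i_{1},\dots,i_{n}}$ is the partition of $A^{I}$ with $u,v$ in the same block iff $u(i_{k})=v(i_{k})$ for all $k$; $\mathcal{P}(A,I)$ is the filter of partitions of $A^{I}$ coarser than some $\mathcal{P}_{i_{1},\dots,i_{n}}$, and $\{\emptyset\}\cup\bigcup\mathcal{P}(A,I)$ (all blocks of such partitions, plus $\emptyset$) is a Boolean algebra of subsets of $A^{I}$. $\mathbf{F}(A,I)=\{h\in A^{A^{I}}:\Pi(h)\in\mathcal{P}(A,I)\}$, a subalgebra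 of $\Omega(A)^{A^{I}}$ freely generated in $V(\Omega(A))$ by the projections $\pi_{i}(u)=u(i)$; each element has the form $\hat{r}^{\mathbf{F}(A,I)}(\pi_{i_{1}},\dots,\pi_{i_{n}})$. A map $h:A^{I}\to A^{J}$ is uniformly continuous if $[h]_{-1}(P)\in\mathcal{P}(A,I)$ for all $P\in\mathcal{P}(A,J)$; then each $\pi_{j}\circ h\in\mathbf{F}(A,I)$. For $h=\hat{r}^{\mathbf{F}(A,I)}(\pi_{i_{1}},\dots,\pi_{i_{n}})$, $\overline{h}^{\mathcal{L}}((\ell_{i})_{i\in I})=\hat{r}^{\mathcal{L}}(\ell_{i_{1}},\dots,\ell_{i_{n}})$ (well defined), and for uniformly continuous $f$, $\overline{f}^{\mathcal{L}}(\alpha)=(\overline{\pi_{j}\circ f}^{\mathcal{L}}(\alpha))_{j\in J}$. For $\alpha:I\to\mathcal{L}$, $\phi_{\alpha}:\mathbf{F}(A,I)\to\mathcal{L}$ is the unique homomorphism with $\phi_{\alpha}(\pi_{i})=\alpha(i)$; $Z_{\alpha}$ is the filter on $\{\emptyset\}\cup\bigcup\mathcal{P}(A,I)$ with $\phi_{\alpha}(\ell)=\phi_{\alpha}(m)$ iff $\{u:\ell(u)=m(u)\}\in Z_{\alpha}$; $\mathbf{F}(A,I)/Z_{\alpha}$ is the corresponding quotient, with $[\ell]$ the class of $\ell$; $\langle\alpha''(I)\rangle$ is the subalgebra of $\mathcal{L}$ generated by the image of $\alpha$; and $\iota_{\alpha}:\mathbf{F}(A,I)/Z_{\alpha}\to\langle\alpha''(I)\rangle$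 is the isomorphism $\iota_{\alpha}([\ell])=\phi_{\alpha}(\ell)$. The same notation applies to $\beta$ and $J$. Under the hypotheses, $\langle\beta''(J)\rangle\subseteq\langle\alpha''(I)\rangle$, and $\iota_{\beta,\alpha}:\langle\beta''(J)\rangle\to\langle\alpha''(I)\rangle$ is the inclusion map. The map $f^{\beta,\alpha}:\mathbf{F}(A,J)/Z_{\beta}\to\mathbf{F}(A,I)/Z_{\alpha}$ is defined by $f^{\beta,\alpha}([\ell])=[\ell\circ f]$ (this is well defined). *)

theory Defs
  imports "HOL-Library.FuncSet"
begin

text \<open>The set A is modelled by the type 'a.  An operation symbol for h : A^n -> A (n >= 1)
  is represented by the pair (n, h) with h :: 'a list => 'a, normalised to be undefined
  on lists of length different from n (so each h : A^n -> A has exactly one code).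
  Constant symbols are indexed by the elements of A.\<close>

definition op_sym :: "nat \<Rightarrow> ('a list \<Rightarrow> 'a) \<Rightarrow> bool" where
  "op_sym n h \<longleftrightarrow> n \<ge> 1 \<and> (\<forall>xs. length xs \<noteq> n \<longrightarrow> h xs = undefined)"

record ('a, 'l) osig_alg =
  ocarrier :: "'l set"
  cst :: "'a \<Rightarrow> 'l"
  opr :: "nat \<Rightarrow> ('a list \<Rightarrow> 'a) \<Rightarrow> 'l list \<Rightarrow> 'l"

definition is_oalg :: "('a, 'l) osig_alg \<Rightarrow> bool" where
  "is_oalg L \<longleftrightarrow> (\<forall>a. cst L a \<in> ocarrier L) \<and>
     (\<forall>n h xs. op_sym n h \<and> length xs = n \<and> set xs \<subseteq> ocarrier L \<longrightarrow> opr L n h xs \<in> ocarrier L)"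

definition Omega :: "('a, 'a) osig_alg" where
  "Omega = \<lparr>ocarrier = UNIV, cst = (\<lambda>a. a), opr = (\<lambda>n h xs. h xs)\<rparr>"

datatype 'a oterm = TVar nat | TCst 'a | TOp nat "'a list \<Rightarrow> 'a" "'a oterm list"

fun wf_term :: "'a oterm \<Rightarrow> bool" where
  "wf_term (TVar k) = True"
| "wf_term (TCst a) = True"
| "wf_term (TOp n h ts) = (op_sym n h \<and> length ts = n \<and> (\<forall>t\<in>set ts. wf_term t))"

primrec teval :: "('a, 'l) osig_alg \<Rightarrow> (nat \<Rightarrow> 'l) \<Rightarrow> 'a oterm \<Rightarrow> 'l" where
  "teval L \<rho> (TVar k) = \<rho> k"
| "teval L \<rho> (TCst a) = cst L a"
| "teval L \<rho> (TOp n h ts) = opr L n h (map (teval L \<rho>) ts)"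

text \<open>Membership in the variety V(Omega(A)) generated by Omega(A): an algebra of the
  signature satisfying every identity valid in Omega(A) (Birkhoff: V(K) = Mod(Id(K))).\<close>
definition in_V_Omega :: "('a, 'l) osig_alg \<Rightarrow> bool" where
  "in_V_Omega L \<longleftrightarrow> is_oalg L \<and>
     (\<forall>s t. wf_term s \<and> wf_term t \<and> (\<forall>\<rho>. teval Omega \<rho> s = teval Omega \<rho> t) \<longrightarrow>
        (\<forall>\<rho>. range \<rho> \<subseteq> ocarrier L \<longrightarrow> teval L \<rho> s = teval L \<rho> t))"

definition cube :: "'i set \<Rightarrow> ('i \<Rightarrow> 'a) set" where
  "cube I = I \<rightarrow>\<^sub>E UNIV"

definition is_partition :: "'x set set \<Rightarrow> 'x set \<Rightarrow> bool" where
  "is_partition P X \<longleftrightarrow> \<Union>P = X \<and> {} \<notin> P \<and> (\<forall>B\<in>P. \<forall>C\<in>P. B \<noteq> C \<longrightarrow> B \<inter> C = {})"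

definition fib_part :: "('x \<Rightarrow> 'y) \<Rightarrow> 'x set \<Rightarrow> 'x set set" where
  "fib_part h X = {h -` {y} \<inter> X | y. y \<in> h ` X}"

definition preim_part :: "('x \<Rightarrow> 'y) \<Rightarrow> 'x set \<Rightarrow> 'y set set \<Rightarrow> 'x set set" where
  "preim_part h X P = {h -` R \<inter> X | R. R \<in> P} - {{}}"

definition coord_part :: "'i set \<Rightarrow> 'i list \<Rightarrow> ('i \<Rightarrow> 'a) set set" where
  "coord_part I is = {{v \<in> cube I. \<forall>i\<in>set is. v i = u i} | u. u \<in> cube I}"

definition coarser :: "'x set set \<Rightarrow> 'x set set \<Rightarrow> bool" where
  "coarser P Q \<longleftrightarrow> (\<forall>B\<in>Q. \<exists>C\<in>P. B \<subseteq> C)"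

definition PF :: "'i set \<Rightarrow> ('i \<Rightarrow> 'a) set set set" where
  "PF I = {P. is_partition P (cube I) \<and> (\<exists>is. set is \<subseteq> I \<and> coarser P (coord_part I is))}"

definition BA :: "'i set \<Rightarrow> ('i \<Rightarrow> 'a) set set" where
  "BA I = insert {} (\<Union>(PF I))"

definition FA :: "'i set \<Rightarrow> (('i \<Rightarrow> 'a) \<Rightarrow> 'a) set" where
  "FA I = {h \<in> extensional (cube I). fib_part h (cube I) \<in> PF I}"

definition proj :: "'i set \<Rightarrow> 'i \<Rightarrow> ('i \<Rightarrow> 'a) \<Rightarrow> 'a" where
  "proj I i = restrict (\<lambda>u. u i) (cube I)"

definition unif_cont :: "'i set \<Rightarrow> 'j set \<Rightarrow> (('i \<Rightarrow> 'a) \<Rightarrow> ('j \<Rightarrow> 'a)) \<Rightarrow> bool" where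
  "unif_cont I J f \<longleftrightarrow> f \<in> cube I \<rightarrow> cube J \<and>
     (\<forall>P\<in>PF J. preim_part f (cube I) P \<in> PF I)"

text \<open>Operations of F(A,I) as a subalgebra of Omega(A)^{A^I}.\<close>
definition Fcst :: "'i set \<Rightarrow> 'a \<Rightarrow> ('i \<Rightarrow> 'a) \<Rightarrow> 'a" where
  "Fcst I c = restrict (\<lambda>u. c) (cube I)"

definition Fop :: "'i set \<Rightarrow> nat \<Rightarrow> ('a list \<Rightarrow> 'a) \<Rightarrow> (('i \<Rightarrow> 'a) \<Rightarrow> 'a) list \<Rightarrow> ('i \<Rightarrow> 'a) \<Rightarrow> 'a" where
  "Fop I n h gs = restrict (\<lambda>u. h (map (\<lambda>g. g u) gs)) (cube I)"

definition is_hom_F :: "'i set \<Rightarrow> ('a, 'l) osig_alg \<Rightarrow> ((('i \<Rightarrow> 'a) \<Rightarrow> 'a) \<Rightarrow> 'l) \<Rightarrow> bool" where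
  "is_hom_F I L \<phi> \<longleftrightarrow> \<phi> \<in> FA I \<rightarrow> ocarrier L \<and> (\<forall>c. \<phi> (Fcst I c) = cst L c) \<and>
     (\<forall>n h gs. op_sym n h \<and> length gs = n \<and> set gs \<subseteq> FA I \<longrightarrow>
        \<phi> (Fop I n h gs) = opr L n h (map \<phi> gs))"

definition phi :: "'i set \<Rightarrow> ('a, 'l) osig_alg \<Rightarrow> ('i \<Rightarrow> 'l) \<Rightarrow> (('i \<Rightarrow> 'a) \<Rightarrow> 'a) \<Rightarrow> 'l" where
  "phi I L \<alpha> = (THE \<phi>. \<phi> \<in> FA I \<rightarrow>\<^sub>E ocarrier L \<and> is_hom_F I L \<phi> \<and> (\<forall>i\<in>I. \<phi> (proj I i) = \<alpha> i))"

definition eqset :: "'i set \<Rightarrow> (('i \<Rightarrow> 'a) \<Rightarrow> 'a) \<Rightarrow> (('i \<Rightarrow> 'a) \<Rightarrow> 'a) \<Rightarrow> ('i \<Rightarrow> 'a) set" where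
  "eqset I l m = {u \<in> cube I. l u = m u}"

definition is_filter_on :: "'x set set \<Rightarrow> 'x set \<Rightarrow> 'x set set \<Rightarrow> bool" where
  "is_filter_on B T Z \<longleftrightarrow> Z \<subseteq> B \<and> T \<in> Z \<and> (\<forall>S\<in>Z. \<forall>S'\<in>Z. S \<inter> S' \<in> Z) \<and>
     (\<forall>S\<in>Z. \<forall>S'\<in>B. S \<subseteq> S' \<longrightarrow> S' \<in> Z)"

definition Zf :: "'i set \<Rightarrow> ('a, 'l) osig_alg \<Rightarrow> ('i \<Rightarrow> 'l) \<Rightarrow> ('i \<Rightarrow> 'a) set set" where
  "Zf I L \<alpha> = (THE Z. is_filter_on (BA I) (cube I) Z \<and>
     (\<forall>l\<in>FA I. \<forall>m\<in>FA I. phi I L \<alpha> l = phi I L \<alpha> m \<longleftrightarrow> eqset I l m \<in> Z))"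

definition Zrel :: "'i set \<Rightarrow> ('a, 'l) osig_alg \<Rightarrow> ('i \<Rightarrow> 'l) \<Rightarrow> ((('i \<Rightarrow> 'a) \<Rightarrow> 'a) \<times> (('i \<Rightarrow> 'a) \<Rightarrow> 'a)) set" where
  "Zrel I L \<alpha> = {(l, m). l \<in> FA I \<and> m \<in> FA I \<and> eqset I l m \<in> Zf I L \<alpha>}"

definition Fquot :: "'i set \<Rightarrow> ('a, 'l) osig_alg \<Rightarrow> ('i \<Rightarrow> 'l) \<Rightarrow> (('i \<Rightarrow> 'a) \<Rightarrow> 'a) set set" where
  "Fquot I L \<alpha> = FA I // Zrel I L \<alpha>"

definition cls :: "'i set \<Rightarrow> ('a, 'l) osig_alg \<Rightarrow> ('i \<Rightarrow> 'l) \<Rightarrow> (('i \<Rightarrow> 'a) \<Rightarrow> 'a) \<Rightarrow> (('i \<Rightarrow> 'a) \<Rightarrow> 'a) set" where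
  "cls I L \<alpha> l = Zrel I L \<alpha> `` {l}"

text \<open>iota_alpha([l]) = phi_alpha(l).\<close>
definition iota :: "'i set \<Rightarrow> ('a, 'l) osig_alg \<Rightarrow> ('i \<Rightarrow> 'l) \<Rightarrow> (('i \<Rightarrow> 'a) \<Rightarrow> 'a) set \<Rightarrow> 'l" where
  "iota I L \<alpha> X = the_elem (phi I L \<alpha> ` X)"

definition gen_sub :: "('a, 'l) osig_alg \<Rightarrow> 'l set \<Rightarrow> 'l set" where
  "gen_sub L X = \<Inter>{S. S \<subseteq> ocarrier L \<and> X \<subseteq> S \<and> (\<forall>a. cst L a \<in> S) \<and>
      (\<forall>n h xs. op_sym n h \<and> length xs = n \<and> set xs \<subseteq> S \<longrightarrow> opr L n h xs \<in> S)}"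

definition incl :: "('a, 'l) osig_alg \<Rightarrow> 'l set \<Rightarrow> 'l \<Rightarrow> 'l" where
  "incl L Y = restrict id (gen_sub L Y)"

text \<open>f^{beta,alpha}([l]) = [l o f].\<close>
definition fquot_map :: "'i set \<Rightarrow> 'j set \<Rightarrow> ('a, 'l) osig_alg \<Rightarrow> ('i \<Rightarrow> 'l) \<Rightarrow> ('j \<Rightarrow> 'l) \<Rightarrow>
    (('i \<Rightarrow> 'a) \<Rightarrow> ('j \<Rightarrow> 'a)) \<Rightarrow> (('j \<Rightarrow> 'a) \<Rightarrow> 'a) set \<Rightarrow> (('i \<Rightarrow> 'a) \<Rightarrow> 'a) set" where
  "fquot_map I J L \<alpha> \<beta> f X = the_elem ((\<lambda>l. cls I L \<alpha> (restrict (l \<circ> f) (cube I))) ` X)"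

text \<open>For h = r^F(pi_{i1},...,pi_{in}): overline{h}^L(alpha) = r^L(alpha i1, ..., alpha in);
  a constant element c^F is sent to c^L (covers the case I = {}).\<close>
definition ovl :: "'i set \<Rightarrow> ('a, 'l) osig_alg \<Rightarrow> (('i \<Rightarrow> 'a) \<Rightarrow> 'a) \<Rightarrow> ('i \<Rightarrow> 'l) \<Rightarrow> 'l" where
  "ovl I L h \<alpha> = (SOME y. (\<exists>c. h = Fcst I c \<and> y = cst L c) \<or>
     (\<exists>n r is. op_sym n r \<and> length is = n \<and> set is \<subseteq> I \<and>
        h = Fop I n r (map (proj I) is) \<and> y = opr L n r (map \<alpha> is)))"

definition ovlF :: "'i set \<Rightarrow> 'j set \<Rightarrow> ('a, 'l) osig_alg \<Rightarrow> (('i \<Rightarrow> 'a) \<Rightarrow> ('j \<Rightarrow> 'a)) \<Rightarrow>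
    ('i \<Rightarrow> 'l) \<Rightarrow> 'j \<Rightarrow> 'l" where
  "ovlF I J L f \<alpha> = (\<lambda>j\<in>J. ovl I L (restrict (\<lambda>u. f u j) (cube I)) \<alpha>)"

end

theory Submission
  imports Defs
begin

text \<open>Every element of F(A,I) is the value at the projections of a term in finitely many
  variables from I.  Two terms representing the same element define the same function on
  A^I, so their equality is an identity of Omega(A) and hence of L; thus phi_alpha evaluates
  a representing term at alpha.  The 4-ary operation "if x0 = x1 then x2 else x3" shows that
  phi_alpha identifies l' and m' as soon as it identifies some pair l, m whose equaliser is
  contained in that of l' and m'.  Hence Z_alpha consists exactly of the equalisers of pairs
  identified by phi_alpha, the class [l] is the fibre of phi_alpha through l, and
  iota_alpha [l] is phi_alpha l.  Finally, if t represents m in F(A,J), then m \<circ> f is t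
  evaluated at the coordinate functions of f, which phi_alpha sends to beta; hence
  phi_alpha (m \<circ> f) = phi_beta m, which is the required commutation.\<close>

datatype ('a, 'v) vterm = Var 'v | Cst 'a | App nat "'a list \<Rightarrow> 'a" "('a, 'v) vterm list"

fun wf_vterm :: "('a, 'v) vterm \<Rightarrow> bool" where
  "wf_vterm (Var v) = True"
| "wf_vterm (Cst c) = True"
| "wf_vterm (App n h ts) = (op_sym n h \<and> length ts = n \<and> (\<forall>t\<in>set ts. wf_vterm t))"

fun vterm_vars :: "('a, 'v) vterm \<Rightarrow> 'v set" where
  "vterm_vars (Var v) = {v}"
| "vterm_vars (Cst c) = {}"
| "vterm_vars (App n h ts) = (\<Union>t\<in>set ts. vterm_vars t)"

primrec veval :: "('a, 'l) osig_alg \<Rightarrow> ('v \<Rightarrow> 'l) \<Rightarrow> ('a, 'v) vterm \<Rightarrow> 'l" where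
  "veval L \<rho> (Var v) = \<rho> v"
| "veval L \<rho> (Cst c) = cst L c"
| "veval L \<rho> (App n h ts) = opr L n h (map (veval L \<rho>) ts)"

primrec to_oterm :: "('v \<Rightarrow> nat) \<Rightarrow> ('a, 'v) vterm \<Rightarrow> 'a oterm" where
  "to_oterm g (Var v) = TVar (g v)"
| "to_oterm g (Cst c) = TCst c"
| "to_oterm g (App n h ts) = TOp n h (map (to_oterm g) ts)"

lemma teval_to_oterm: "teval L \<rho> (to_oterm g t) = veval L (\<rho> \<circ> g) t"
  by (induction t) (auto cong: map_cong)

lemma wf_term_to_oterm: "wf_term (to_oterm g t) = wf_vterm t"
  by (induction t) auto

lemma finite_vterm_vars: "finite (vterm_vars t)"
  by (induction t) auto

lemma veval_cong: "\<forall>v\<in>vterm_vars t. \<rho> v = \<rho>' v \<Longrightarrow> veval L \<rho> t = veval L \<rho>' t"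
  by (induction t) (auto cong: map_cong)

lemma veval_closed:
  assumes "\<And>c. cst L c \<in> S"
    and "\<And>n h xs. op_sym n h \<Longrightarrow> length xs = n \<Longrightarrow> set xs \<subseteq> S \<Longrightarrow> opr L n h xs \<in> S"
    and "wf_vterm t" and "\<forall>v\<in>vterm_vars t. \<rho> v \<in> S"
  shows "veval L \<rho> t \<in> S"
  using assms(3,4) by (induction t) (auto intro!: assms(1,2))

lemma veval_carrier:
  "is_oalg L \<Longrightarrow> wf_vterm t \<Longrightarrow> \<forall>v\<in>vterm_vars t. \<rho> v \<in> ocarrier L \<Longrightarrow>
    veval L \<rho> t \<in> ocarrier L"
  by (rule veval_closed) (auto simp: is_oalg_def)

text \<open>Birkhoff's characterisation of V(Omega(A)) is stated for terms in the variables
  0, 1, 2, ...; a term in arbitrary variables is transferred by an injective renaming of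
  its finitely many variables.\<close>
lemma in_V_Omega_veval_eq:
  fixes s t :: "('a, 'v) vterm"
  assumes V: "in_V_Omega L" and wf: "wf_vterm s" "wf_vterm t"
    and Omega_eq: "\<And>u. veval Omega u s = veval Omega u t"
    and \<rho>: "\<forall>v\<in>vterm_vars s \<union> vterm_vars t. \<rho> v \<in> ocarrier L"
  shows "veval L \<rho> s = veval L \<rho> t"
proof -
  let ?W = "vterm_vars s \<union> vterm_vars t"
  obtain g :: "'v \<Rightarrow> nat" where g: "inj_on g ?W"
    using finite_imp_inj_to_nat_seg[of ?W] finite_vterm_vars by blast
  have oalg: "is_oalg L" using V by (simp add: in_V_Omega_def)
  define \<rho>' where "\<rho>' k = (if k \<in> g ` ?W then \<rho> (inv_into ?W g k) else cst L undefined)" for k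
  have \<rho>'_range: "range \<rho>' \<subseteq> ocarrier L"
    using \<rho> oalg g by (auto simp: \<rho>'_def is_oalg_def)
  have \<rho>'_g: "\<rho>' (g v) = \<rho> v" if "v \<in> ?W" for v
    using g that by (simp add: \<rho>'_def)
  have "\<forall>u. teval Omega u (to_oterm g s) = teval Omega u (to_oterm g t)"
    by (simp add: teval_to_oterm Omega_eq)
  then have "teval L \<rho>' (to_oterm g s) = teval L \<rho>' (to_oterm g t)"
    using V wf \<rho>'_range wf_term_to_oterm unfolding in_V_Omega_def by blast
  moreover have "veval L (\<rho>' \<circ> g) s = veval L \<rho> s" "veval L (\<rho>' \<circ> g) t = veval L \<rho> t"
    by (auto intro!: veval_cong simp: \<rho>'_g)
  ultimately show ?thesis by (simp add: teval_to_oterm)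
qed

definition determined_by :: "'i set \<Rightarrow> (('i \<Rightarrow> 'a) \<Rightarrow> 'b) \<Rightarrow> 'i list \<Rightarrow> bool" where
  "determined_by I h ks \<longleftrightarrow> (\<forall>u\<in>cube I. \<forall>v\<in>cube I. (\<forall>i\<in>set ks. u i = v i) \<longrightarrow> h u = h v)"

lemma coarser_coord_part_same_block:
  fixes P :: "('i \<Rightarrow> 'a) set set" and u v :: "'i \<Rightarrow> 'a"
  assumes "coarser P (coord_part I ks)" and "u \<in> cube I" "v \<in> cube I" "\<forall>i\<in>set ks. u i = v i"
  obtains C where "C \<in> P" "u \<in> C" "v \<in> C"
proof -
  let ?B = "{w \<in> cube I. \<forall>i\<in>set ks. w i = u i}"
  have "?B \<in> coord_part I ks" using assms(2) unfolding coord_part_def by blast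
  then obtain C where "C \<in> P" "?B \<subseteq> C" using assms(1) unfolding coarser_def by blast
  with assms(2-4) show thesis by (intro that[of C]) auto
qed

lemma fib_part_partition: "is_partition (fib_part h X) X"
  unfolding is_partition_def fib_part_def by auto

lemma coord_part_partition: "is_partition (coord_part I ks) (cube I)"
  unfolding is_partition_def
proof (intro conjI ballI impI)
  show "\<Union> (coord_part I ks) = cube I" "{} \<notin> coord_part I ks"
    by (auto simp: coord_part_def)
  fix B C assume "B \<in> coord_part I ks" "C \<in> coord_part I ks" "B \<noteq> C"
  then obtain u v where "B = {w \<in> cube I. \<forall>i\<in>set ks. w i = u i}" "C = {w \<in> cube I. \<forall>i\<in>set ks. w i = v i}"
    by (auto simp: coord_part_def)
  with \<open>B \<noteq> C\<close> show "B \<inter> C = {}" by auto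
qed

lemma FA_iff:
  fixes h :: "('i \<Rightarrow> 'a) \<Rightarrow> 'a"
  shows "h \<in> FA I \<longleftrightarrow> h \<in> extensional (cube I) \<and> (\<exists>ks. set ks \<subseteq> I \<and> determined_by I h ks)"
proof
  assume h: "h \<in> FA I"
  then obtain ks where ks: "set ks \<subseteq> I" "coarser (fib_part h (cube I)) (coord_part I ks)"
    unfolding FA_def PF_def by auto
  have "determined_by I h ks"
    unfolding determined_by_def
  proof (intro ballI impI)
    fix u v :: "'i \<Rightarrow> 'a" assume "u \<in> cube I" "v \<in> cube I" "\<forall>i\<in>set ks. u i = v i"
    with ks(2) obtain C where "C \<in> fib_part h (cube I)" "u \<in> C" "v \<in> C"
      by (rule coarser_coord_part_same_block)
    then show "h u = h v" unfolding fib_part_def by fastforce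
  qed
  with h ks(1) show "h \<in> extensional (cube I) \<and> (\<exists>ks. set ks \<subseteq> I \<and> determined_by I h ks)"
    unfolding FA_def by blast
next
  assume "h \<in> extensional (cube I) \<and> (\<exists>ks. set ks \<subseteq> I \<and> determined_by I h ks)"
  then obtain ks where h: "h \<in> extensional (cube I)" "set ks \<subseteq> I" "determined_by I h ks"
    by blast
  have "coarser (fib_part h (cube I)) (coord_part I ks)"
    unfolding coarser_def
  proof
    fix B :: "('i \<Rightarrow> 'a) set" assume "B \<in> coord_part I ks"
    then obtain u :: "'i \<Rightarrow> 'a" where u: "u \<in> cube I" "B = {v \<in> cube I. \<forall>i\<in>set ks. v i = u i}"
      unfolding coord_part_def by blast
    have "B \<subseteq> h -` {h u} \<inter> cube I"
    proof
      fix v assume "v \<in> B"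
      then have v: "v \<in> cube I" "\<forall>i\<in>set ks. v i = u i" using u(2) by auto
      then have "h v = h u" using h(3) u(1) unfolding determined_by_def by blast
      with v(1) show "v \<in> h -` {h u} \<inter> cube I" by simp
    qed
    moreover have "h -` {h u} \<inter> cube I \<in> fib_part h (cube I)"
      using u(1) unfolding fib_part_def by blast
    ultimately show "\<exists>C\<in>fib_part h (cube I). B \<subseteq> C" by blast
  qed
  then have "fib_part h (cube I) \<in> PF I"
    unfolding PF_def using fib_part_partition h(2) by blast
  with h(1) show "h \<in> FA I" unfolding FA_def by simp
qed

lemma FA_extensional: "h \<in> FA I \<Longrightarrow> h \<in> extensional (cube I)"
  by (simp add: FA_def)

lemma restrict_in_cube: "restrict u I \<in> cube I"
  by (simp add: cube_def)

lemma Fcst_FA: "Fcst I c \<in> FA I"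
  unfolding FA_iff Fcst_def determined_by_def by (intro conjI exI[of _ "[]"]) auto

lemma proj_FA: "i \<in> I \<Longrightarrow> proj I i \<in> FA I"
  unfolding FA_iff proj_def determined_by_def by (intro conjI exI[of _ "[i]"]) auto

lemma proj_apply: "u \<in> cube I \<Longrightarrow> proj I i u = u i"
  by (simp add: proj_def)

lemma Fop_FA:
  fixes gs :: "(('i \<Rightarrow> 'a) \<Rightarrow> 'a) list"
  assumes "set gs \<subseteq> FA I"
  shows "Fop I n h gs \<in> FA I"
proof -
  have "\<forall>g\<in>set gs. \<exists>ks. set ks \<subseteq> I \<and> determined_by I g ks"
    using assms by (metis FA_iff subsetD)
  then obtain ks where ks: "\<forall>g\<in>set gs. set (ks g) \<subseteq> I \<and> determined_by I g (ks g)"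
    by metis
  have "determined_by I (Fop I n h gs) (concat (map ks gs))"
    unfolding determined_by_def
  proof (intro ballI impI)
    fix u v :: "'i \<Rightarrow> 'a"
    assume uv: "u \<in> cube I" "v \<in> cube I" "\<forall>i\<in>set (concat (map ks gs)). u i = v i"
    have "g u = g v" if "g \<in> set gs" for g
      using ks uv that unfolding determined_by_def by auto
    then have "map (\<lambda>g. g u) gs = map (\<lambda>g. g v) gs" by simp
    then show "Fop I n h gs u = Fop I n h gs v"
      unfolding Fop_def by (simp only: restrict_apply' uv(1,2))
  qed
  moreover have "set (concat (map ks gs)) \<subseteq> I" using ks by auto
  ultimately show ?thesis
    unfolding FA_iff by (intro conjI exI[of _ "concat (map ks gs)"]) (simp_all add: Fop_def)
qed

definition Falg :: "'i set \<Rightarrow> ('a, ('i \<Rightarrow> 'a) \<Rightarrow> 'a) osig_alg" where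
  "Falg I = \<lparr>ocarrier = FA I, cst = Fcst I, opr = Fop I\<rparr>"

lemma Falg_simps [simp]:
  "ocarrier (Falg I) = FA I" "cst (Falg I) = Fcst I" "opr (Falg I) = Fop I"
  by (simp_all add: Falg_def)

lemma is_oalg_Falg: "is_oalg (Falg I)"
  unfolding is_oalg_def by (auto intro: Fcst_FA Fop_FA)

lemma veval_Falg_FA:
  "wf_vterm t \<Longrightarrow> \<forall>v\<in>vterm_vars t. \<sigma> v \<in> FA I \<Longrightarrow> veval (Falg I) \<sigma> t \<in> FA I"
  using veval_carrier[OF is_oalg_Falg, of t \<sigma> I] by simp

lemma veval_Falg_apply:
  "u \<in> cube I \<Longrightarrow> veval (Falg I) \<sigma> t u = veval Omega (\<lambda>v. \<sigma> v u) t"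
  by (induction t) (auto simp: Fcst_def Fop_def Omega_def cong: map_cong)

lemma FA_cases:
  fixes h :: "('i \<Rightarrow> 'a) \<Rightarrow> 'a"
  assumes "h \<in> FA I"
  obtains c where "h = Fcst I c"
  | n r ks where "op_sym n r" "length ks = n" "set ks \<subseteq> I" "h = Fop I n r (map (proj I) ks)"
proof -
  obtain ks where h: "h \<in> extensional (cube I)" "set ks \<subseteq> I" "determined_by I h ks"
    using assms unfolding FA_iff by blast
  show thesis
  proof (cases "ks = []")
    case True
    define u0 :: "'i \<Rightarrow> 'a" where "u0 = restrict (\<lambda>_. undefined) I"
    have u0: "u0 \<in> cube I" unfolding u0_def by (rule restrict_in_cube)
    have "h = Fcst I (h u0)"
    proof (rule extensionalityI[of _ "cube I"])
      fix u :: "'i \<Rightarrow> 'a" assume u: "u \<in> cube I"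
      have "h u = h u0"
        using h(3) u u0 True unfolding determined_by_def by (metis empty_iff empty_set)
      with u show "h u = Fcst I (h u0) u" by (simp add: Fcst_def)
    qed (use h(1) in \<open>simp_all add: Fcst_def\<close>)
    then show thesis by (rule that(1))
  next
    case False
    \<comment> \<open>r rebuilds a point of A^I from the values of its coordinates in ks\<close>
    define r where "r xs = (if length xs = length ks
      then h (restrict (\<lambda>i. the (map_of (zip ks xs) i)) I) else undefined)" for xs
    have "op_sym (length ks) r"
      using False by (simp add: op_sym_def r_def Suc_le_eq)
    moreover have "h = Fop I (length ks) r (map (proj I) ks)"
    proof (rule extensionalityI[of _ "cube I"])
      fix u :: "'i \<Rightarrow> 'a" assume u: "u \<in> cube I"
      let ?w = "restrict (\<lambda>i. the (map_of (zip ks (map u ks)) i)) I"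
      have "\<forall>i\<in>set ks. ?w i = u i"
        using h(2) by (auto simp: map_of_zip_map)
      then have "h ?w = h u"
        using h(3) u restrict_in_cube unfolding determined_by_def by blast
      then show "h u = Fop I (length ks) r (map (proj I) ks) u"
        using u by (simp add: Fop_def r_def proj_apply comp_def)
    qed (use h(1) in \<open>auto simp: Fop_def\<close>)
    ultimately show thesis using h(2) by (intro that(2)) auto
  qed
qed

section \<open>The homomorphism phi_alpha\<close>

definition represents :: "'i set \<Rightarrow> ('a, 'i) vterm \<Rightarrow> (('i \<Rightarrow> 'a) \<Rightarrow> 'a) \<Rightarrow> bool" where
  "represents I t h \<longleftrightarrow> wf_vterm t \<and> vterm_vars t \<subseteq> I \<and> veval (Falg I) (proj I) t = h"

lemma represents_Cst: "represents I (Cst c) (Fcst I c)"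
  by (simp add: represents_def)

lemma represents_Var: "i \<in> I \<Longrightarrow> represents I (Var i) (proj I i)"
  by (simp add: represents_def)

lemma represents_App:
  assumes "op_sym n h" "length ts = n" "list_all2 (represents I) ts gs"
  shows "represents I (App n h ts) (Fop I n h gs)"
proof -
  have "(\<forall>t\<in>set ts. wf_vterm t \<and> vterm_vars t \<subseteq> I) \<and> map (veval (Falg I) (proj I)) ts = gs"
    using assms(3) by (induction rule: list_all2_induct) (auto simp: represents_def)
  with assms(1,2) show ?thesis by (auto simp: represents_def)
qed

lemma represents_flat:
  assumes "op_sym n r" "length ks = n" "set ks \<subseteq> I"
  shows "represents I (App n r (map Var ks)) (Fop I n r (map (proj I) ks))"
proof -
  have "list_all2 (represents I) (map Var ks) (map (proj I) ks)"
    using assms(3) by (auto simp: list_all2_conv_all_nth intro!: represents_Var)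
  with assms(1,2) show ?thesis by (metis represents_App length_map)
qed

lemma represents_apply:
  assumes "represents I t h" "u \<in> cube I"
  shows "h u = veval Omega u t"
proof -
  have "h u = veval (Falg I) (proj I) t u"
    using assms(1) by (simp add: represents_def)
  also have "\<dots> = veval Omega (\<lambda>i. proj I i u) t"
    using assms(2) by (rule veval_Falg_apply)
  also have "\<dots> = veval Omega u t"
    using assms by (intro veval_cong) (auto simp: represents_def proj_apply)
  finally show ?thesis .
qed

lemma represents_FA: "represents I t h \<Longrightarrow> h \<in> FA I"
  unfolding represents_def using veval_Falg_FA proj_FA by (metis subsetD)

lemma FA_represented:
  assumes "h \<in> FA I"
  obtains t where "represents I t h"
  using assms
proof (cases rule: FA_cases)
  case (1 c)
  then have "represents I (Cst c) h" by (simp add: represents_Cst)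
  then show thesis by (rule that)
next
  case (2 n r ks)
  then have "represents I (App n r (map Var ks)) h" by (simp add: represents_flat)
  then show thesis by (rule that)
qed

lemma represents_unique:
  assumes V: "in_V_Omega L" and \<alpha>: "\<alpha> \<in> I \<rightarrow> ocarrier L"
    and s: "represents I s h" and t: "represents I t h"
  shows "veval L \<alpha> s = veval L \<alpha> t"
proof (rule in_V_Omega_veval_eq[OF V])
  have vars: "vterm_vars s \<subseteq> I" "vterm_vars t \<subseteq> I"
    using s t by (auto simp: represents_def)
  show "veval Omega u s = veval Omega u t" for u
  proof -
    have "veval Omega u s = veval Omega (restrict u I) s"
      using vars by (intro veval_cong) auto
    also have "\<dots> = veval Omega (restrict u I) t"
      using represents_apply[OF s] represents_apply[OF t] restrict_in_cube by metis
    also have "\<dots> = veval Omega u t"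
      using vars by (intro veval_cong) auto
    finally show ?thesis .
  qed
  show "\<forall>v\<in>vterm_vars s \<union> vterm_vars t. \<alpha> v \<in> ocarrier L"
    using vars \<alpha> by auto
qed (use s t in \<open>auto simp: represents_def\<close>)

lemma veval_represents_carrier:
  assumes "is_oalg L" "\<alpha> \<in> I \<rightarrow> ocarrier L" "represents I t h"
  shows "veval L \<alpha> t \<in> ocarrier L"
  using assms by (intro veval_carrier) (auto simp: represents_def)

lemma veval_hom:
  assumes "is_hom_F I L \<phi>" "wf_vterm t" "\<forall>v\<in>vterm_vars t. \<sigma> v \<in> FA I"
  shows "\<phi> (veval (Falg I) \<sigma> t) = veval L (\<lambda>v. \<phi> (\<sigma> v)) t"
  using assms(2,3)
proof (induction t)
  case (App n h ts)
  have FA: "set (map (veval (Falg I) \<sigma>) ts) \<subseteq> FA I"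
    using App.prems by (auto intro!: veval_Falg_FA)
  have hom: "\<forall>n h gs. op_sym n h \<and> length gs = n \<and> set gs \<subseteq> FA I \<longrightarrow>
      \<phi> (Fop I n h gs) = opr L n h (map \<phi> gs)"
    using assms(1) unfolding is_hom_F_def by (elim conjE)
  have "\<phi> (veval (Falg I) \<sigma> (App n h ts)) = opr L n h (map \<phi> (map (veval (Falg I) \<sigma>) ts))"
    unfolding veval.simps Falg_simps by (rule hom[rule_format]) (use App.prems FA in auto)
  also have "map \<phi> (map (veval (Falg I) \<sigma>) ts) = map (veval L (\<lambda>v. \<phi> (\<sigma> v))) ts"
    using App by auto
  finally show ?case by simp
qed (use assms(1) in \<open>auto simp: is_hom_F_def\<close>)

lemma hom_represents:
  fixes t :: "('a, 'i) vterm"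
  assumes "is_hom_F I L \<phi>" "\<forall>i\<in>I. \<phi> (proj I i) = \<alpha> i" "represents I t h"
  shows "\<phi> h = veval L \<alpha> t"
proof -
  have t: "wf_vterm t" "vterm_vars t \<subseteq> I" "veval (Falg I) (proj I) t = h"
    using assms(3) by (auto simp: represents_def)
  have "\<forall>i\<in>vterm_vars t. (proj I i :: ('i \<Rightarrow> 'a) \<Rightarrow> 'a) \<in> FA I"
    using t(2) by (auto intro: proj_FA)
  then have "\<phi> h = veval L (\<lambda>i. \<phi> (proj I i)) t"
    unfolding t(3)[symmetric] by (rule veval_hom[OF assms(1) t(1)])
  also have "\<dots> = veval L \<alpha> t"
    using assms(2) t(2) by (intro veval_cong) auto
  finally show ?thesis .
qed

definition term_eval_hom :: "'i set \<Rightarrow> ('a, 'l) osig_alg \<Rightarrow> ('i \<Rightarrow> 'l) \<Rightarrow> (('i \<Rightarrow> 'a) \<Rightarrow> 'a) \<Rightarrow> 'l" where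
  "term_eval_hom I L \<alpha> = (\<lambda>h\<in>FA I. veval L \<alpha> (SOME t. represents I t h))"

lemma term_eval_hom_represents:
  assumes "in_V_Omega L" "\<alpha> \<in> I \<rightarrow> ocarrier L" "represents I t h"
  shows "term_eval_hom I L \<alpha> h = veval L \<alpha> t"
proof -
  have "represents I (SOME t. represents I t h) h" using assms(3) by (rule someI)
  then have "veval L \<alpha> (SOME t. represents I t h) = veval L \<alpha> t"
    using assms by (intro represents_unique)
  with represents_FA[OF assms(3)] show ?thesis by (simp add: term_eval_hom_def)
qed

lemma term_eval_hom_is_hom:
  fixes L :: "('a, 'l) osig_alg" and I :: "'i set"
  assumes V: "in_V_Omega L" and \<alpha>: "\<alpha> \<in> I \<rightarrow> ocarrier L"
  shows "term_eval_hom I L \<alpha> \<in> FA I \<rightarrow>\<^sub>E ocarrier L \<and> is_hom_F I L (term_eval_hom I L \<alpha>)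
    \<and> (\<forall>i\<in>I. term_eval_hom I L \<alpha> (proj I i) = \<alpha> i)"
proof (intro conjI ballI)
  have represented: "represents I (SOME t. represents I t g) g" if "g \<in> FA I" for g
    using FA_represented[OF that] by (metis someI)
  have oalg: "is_oalg L" using V by (simp add: in_V_Omega_def)
  show Pi: "term_eval_hom I L \<alpha> \<in> FA I \<rightarrow>\<^sub>E ocarrier L"
  proof (rule PiE_I)
    fix g :: "('i \<Rightarrow> 'a) \<Rightarrow> 'a" assume "g \<in> FA I"
    with represented[OF this] show "term_eval_hom I L \<alpha> g \<in> ocarrier L"
      using veval_represents_carrier[OF oalg \<alpha>] by (simp add: term_eval_hom_def)
  qed (simp add: term_eval_hom_def)
  show "term_eval_hom I L \<alpha> (proj I i) = \<alpha> i" if "i \<in> I" for i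
    using term_eval_hom_represents[OF V \<alpha> represents_Var[OF that]] by simp
  show "is_hom_F I L (term_eval_hom I L \<alpha>)"
    unfolding is_hom_F_def
  proof (intro conjI allI impI)
    show "term_eval_hom I L \<alpha> \<in> FA I \<rightarrow> ocarrier L" using Pi by auto
    show "term_eval_hom I L \<alpha> (Fcst I c) = cst L c" for c
      using term_eval_hom_represents[OF V \<alpha> represents_Cst] by simp
    fix n and h :: "'a list \<Rightarrow> 'a" and gs :: "(('i \<Rightarrow> 'a) \<Rightarrow> 'a) list"
    assume gs: "op_sym n h \<and> length gs = n \<and> set gs \<subseteq> FA I"
    define ts where "ts = map (\<lambda>g. SOME t. represents I t g) gs"
    have "list_all2 (represents I) ts gs"
      unfolding ts_def list_all2_map1 list_all2_same using gs represented by blast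
    then have "represents I (App n h ts) (Fop I n h gs)"
      using gs by (intro represents_App) (auto simp: ts_def)
    moreover have "map (veval L \<alpha>) ts = map (term_eval_hom I L \<alpha>) gs"
      using gs represented by (auto simp: ts_def term_eval_hom_def)
    ultimately show "term_eval_hom I L \<alpha> (Fop I n h gs) = opr L n h (map (term_eval_hom I L \<alpha>) gs)"
      using term_eval_hom_represents[OF V \<alpha>] by simp
  qed
qed

lemma phi_eq_term_eval_hom:
  fixes L :: "('a, 'l) osig_alg" and I :: "'i set"
  assumes V: "in_V_Omega L" and \<alpha>: "\<alpha> \<in> I \<rightarrow> ocarrier L"
  shows "phi I L \<alpha> = term_eval_hom I L \<alpha>"
  unfolding phi_def
proof (rule the_equality)
  show "term_eval_hom I L \<alpha> \<in> FA I \<rightarrow>\<^sub>E ocarrier L \<and> is_hom_F I L (term_eval_hom I L \<alpha>)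
    \<and> (\<forall>i\<in>I. term_eval_hom I L \<alpha> (proj I i) = \<alpha> i)"
    using V \<alpha> by (rule term_eval_hom_is_hom)
  fix \<phi> assume \<phi>: "\<phi> \<in> FA I \<rightarrow>\<^sub>E ocarrier L \<and> is_hom_F I L \<phi> \<and> (\<forall>i\<in>I. \<phi> (proj I i) = \<alpha> i)"
  show "\<phi> = term_eval_hom I L \<alpha>"
  proof (rule extensionalityI[of _ "FA I"])
    fix h :: "('i \<Rightarrow> 'a) \<Rightarrow> 'a" assume "h \<in> FA I"
    then obtain t :: "('a, 'i) vterm" where "represents I t h" by (rule FA_represented)
    with \<phi> show "\<phi> h = term_eval_hom I L \<alpha> h"
      using hom_represents term_eval_hom_represents[OF V \<alpha>] by metis
  qed (use \<phi> in \<open>auto simp: term_eval_hom_def PiE_def\<close>)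
qed

lemma phi_represents:
  "in_V_Omega L \<Longrightarrow> \<alpha> \<in> I \<rightarrow> ocarrier L \<Longrightarrow> represents I t h \<Longrightarrow> phi I L \<alpha> h = veval L \<alpha> t"
  by (simp add: phi_eq_term_eval_hom term_eval_hom_represents)

lemma phi_is_hom: "in_V_Omega L \<Longrightarrow> \<alpha> \<in> I \<rightarrow> ocarrier L \<Longrightarrow> is_hom_F I L (phi I L \<alpha>)"
  by (simp add: phi_eq_term_eval_hom term_eval_hom_is_hom)

section \<open>The filter Z_alpha\<close>

definition switch :: "'a list \<Rightarrow> 'a" where
  "switch xs = (if length xs = 4 then if xs ! 0 = xs ! 1 then xs ! 2 else xs ! 3 else undefined)"

lemma op_sym_switch: "op_sym 4 switch"
  by (simp add: op_sym_def switch_def)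

lemma Fop_switch:
  "Fop I 4 switch [l, m, p, q] = restrict (\<lambda>u. if l u = m u then p u else q u) (cube I)"
  by (simp add: Fop_def switch_def cong: if_cong)

text \<open>phi cannot tell the switch [l, m, p, q] apart from the switch [l, l, p, q] = p.\<close>
lemma hom_switch_eq:
  fixes l m p q :: "('i \<Rightarrow> 'a) \<Rightarrow> 'a"
  assumes H: "is_hom_F I L \<phi>" and FA: "l \<in> FA I" "m \<in> FA I" "p \<in> FA I" "q \<in> FA I"
    and lm: "\<phi> l = \<phi> m"
  shows "\<phi> (Fop I 4 switch [l, m, p, q]) = \<phi> p"
proof -
  have hom: "\<phi> (Fop I 4 switch gs) = opr L 4 switch (map \<phi> gs)" if "length gs = 4" "set gs \<subseteq> FA I" for gs
    using H that op_sym_switch unfolding is_hom_F_def by blast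
  have "Fop I 4 switch [l, l, p, q] = p"
    using FA_extensional[OF FA(3)] by (intro extensionalityI[of _ "cube I"]) (auto simp: Fop_switch)
  then have "\<phi> p = opr L 4 switch [\<phi> l, \<phi> l, \<phi> p, \<phi> q]"
    using hom[of "[l, l, p, q]"] FA by simp
  also have "\<dots> = \<phi> (Fop I 4 switch [l, m, p, q])"
    using hom[of "[l, m, p, q]"] FA lm by simp
  finally show ?thesis by simp
qed

lemma hom_eq_if_eqset_subset:
  fixes l m l' m' :: "('i \<Rightarrow> 'a) \<Rightarrow> 'a"
  assumes H: "is_hom_F I L \<phi>" and FA: "l \<in> FA I" "m \<in> FA I" "l' \<in> FA I" "m' \<in> FA I"
    and lm: "\<phi> l = \<phi> m" and sub: "eqset I l m \<subseteq> eqset I l' m'"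
  shows "\<phi> l' = \<phi> m'"
proof -
  have "Fop I 4 switch [l, m, l', m'] = m'"
  proof (rule extensionalityI[of _ "cube I"])
    show "Fop I 4 switch [l, m, l', m'] \<in> extensional (cube I)" by (simp add: Fop_switch)
    show "m' \<in> extensional (cube I)" using FA(4) by (rule FA_extensional)
    fix u :: "'i \<Rightarrow> 'a" assume "u \<in> cube I"
    with sub show "Fop I 4 switch [l, m, l', m'] u = m' u"
      by (auto simp: Fop_switch eqset_def)
  qed
  then show ?thesis using hom_switch_eq[of I L \<phi> l m l' m'] H FA lm by simp
qed

lemma fibre_BA:
  assumes "\<chi> \<in> FA I"
  shows "\<chi> -` {c} \<inter> cube I \<in> BA I"
proof (cases "c \<in> \<chi> ` cube I")
  case True
  then have "\<chi> -` {c} \<inter> cube I \<in> fib_part \<chi> (cube I)" by (auto simp: fib_part_def)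
  with assms show ?thesis by (auto simp: BA_def FA_def)
next
  case False
  then have "\<chi> -` {c} \<inter> cube I = {}" by blast
  then show ?thesis by (simp add: BA_def)
qed

lemma eqset_BA:
  fixes l m :: "('i \<Rightarrow> 'a) \<Rightarrow> 'a" and c0 c1 :: 'a
  assumes c: "c0 \<noteq> c1" and FA: "l \<in> FA I" "m \<in> FA I"
  shows "eqset I l m \<in> BA I"
proof -
  let ?\<chi> = "Fop I 4 switch [l, m, Fcst I c0, Fcst I c1]"
  have "eqset I l m = ?\<chi> -` {c0} \<inter> cube I"
    using c by (auto simp: eqset_def Fop_switch Fcst_def split: if_splits)
  moreover have "?\<chi> \<in> FA I" using FA by (simp add: Fop_FA Fcst_FA)
  ultimately show ?thesis by (simp add: fibre_BA)
qed

lemma BA_eq_eqset_indicator: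
  fixes S :: "('i \<Rightarrow> 'a) set" and c0 c1 :: 'a
  assumes c: "c0 \<noteq> c1" and S: "S \<in> BA I"
  defines "\<chi> \<equiv> restrict (\<lambda>u. if u \<in> S then c0 else c1) (cube I)"
  shows "\<chi> \<in> FA I" "eqset I \<chi> (Fcst I c0) = S"
proof -
  obtain ks where ks: "set ks \<subseteq> I" "\<forall>u\<in>cube I. \<forall>v\<in>cube I. (\<forall>i\<in>set ks. u i = v i) \<longrightarrow> u \<in> S \<longrightarrow> v \<in> S"
    and S_cube: "S \<subseteq> cube I"
  proof (cases "S = {}")
    case True
    then show thesis by (intro that[of "[]"]) auto
  next
    case False
    then obtain P ks where P: "is_partition P (cube I)" "S \<in> P" "set ks \<subseteq> I"
        "coarser P (coord_part I ks)"
      using S unfolding BA_def PF_def by blast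
    have "v \<in> S" if uv: "u \<in> cube I" "v \<in> cube I" "\<forall>i\<in>set ks. u i = v i" "u \<in> S"
      for u v :: "'i \<Rightarrow> 'a"
    proof -
      obtain C where "C \<in> P" "u \<in> C" "v \<in> C"
        using P(4) uv(1-3) by (rule coarser_coord_part_same_block)
      with P(1,2) uv(4) show "v \<in> S" unfolding is_partition_def by blast
    qed
    moreover have "S \<subseteq> cube I" using P(1,2) unfolding is_partition_def by blast
    ultimately show thesis using P(3) by (intro that) auto
  qed
  have "determined_by I \<chi> ks"
    unfolding determined_by_def \<chi>_def
  proof (intro ballI impI)
    fix u v :: "'i \<Rightarrow> 'a" assume uv: "u \<in> cube I" "v \<in> cube I" "\<forall>i\<in>set ks. u i = v i"
    then have "u \<in> S \<longleftrightarrow> v \<in> S" using ks(2) by (metis (full_types))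
    with uv show "restrict (\<lambda>u. if u \<in> S then c0 else c1) (cube I) u
        = restrict (\<lambda>u. if u \<in> S then c0 else c1) (cube I) v" by simp
  qed
  with ks(1) show "\<chi> \<in> FA I" unfolding FA_iff \<chi>_def by auto
  show "eqset I \<chi> (Fcst I c0) = S"
    using c S_cube by (auto simp: eqset_def \<chi>_def Fcst_def)
qed

definition kernel_eqsets :: "'i set \<Rightarrow> ((('i \<Rightarrow> 'a) \<Rightarrow> 'a) \<Rightarrow> 'l) \<Rightarrow> ('i \<Rightarrow> 'a) set set" where
  "kernel_eqsets I \<phi> = {eqset I l m | l m. l \<in> FA I \<and> m \<in> FA I \<and> \<phi> l = \<phi> m}"

lemma kernel_eqsets_iff:
  assumes H: "is_hom_F I L \<phi>" and FA: "l \<in> FA I" "m \<in> FA I"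
  shows "eqset I l m \<in> kernel_eqsets I \<phi> \<longleftrightarrow> \<phi> l = \<phi> m"
proof
  assume "eqset I l m \<in> kernel_eqsets I \<phi>"
  then obtain l' m' where l'm': "l' \<in> FA I" "m' \<in> FA I" "\<phi> l' = \<phi> m'" "eqset I l m = eqset I l' m'"
    unfolding kernel_eqsets_def by blast
  then show "\<phi> l = \<phi> m"
    using hom_eq_if_eqset_subset[of I L \<phi> l' m' l m] H FA by simp
qed (use FA in \<open>auto simp: kernel_eqsets_def\<close>)

lemma kernel_eqsets_filter:
  fixes c0 c1 :: 'a and \<phi> :: "(('i \<Rightarrow> 'a) \<Rightarrow> 'a) \<Rightarrow> 'l"
  assumes c: "c0 \<noteq> c1" and H: "is_hom_F I L \<phi>"
  shows "is_filter_on (BA I) (cube I) (kernel_eqsets I \<phi>)"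
  unfolding is_filter_on_def
proof (intro conjI ballI impI)
  show "kernel_eqsets I \<phi> \<subseteq> BA I"
    using eqset_BA[OF c] by (auto simp: kernel_eqsets_def)
  have "eqset I (Fcst I c0) (Fcst I c0) = cube I" by (simp add: eqset_def)
  then show "cube I \<in> kernel_eqsets I \<phi>"
    unfolding kernel_eqsets_def using Fcst_FA[of I c0] by blast
next
  fix S S' assume "S \<in> kernel_eqsets I \<phi>" "S' \<in> kernel_eqsets I \<phi>"
  then obtain l m l' m' where
    lm: "l \<in> FA I" "m \<in> FA I" "\<phi> l = \<phi> m" "S = eqset I l m" and
    l'm': "l' \<in> FA I" "m' \<in> FA I" "\<phi> l' = \<phi> m'" "S' = eqset I l' m'"
    unfolding kernel_eqsets_def by blast
  text \<open>Off S, p and q take the distinct values c0 and c1; on S they are l' and m'.\<close>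
  define p where "p = Fop I 4 switch [l, m, l', Fcst I c0]"
  define q where "q = Fop I 4 switch [l, m, m', Fcst I c1]"
  have pq: "p \<in> FA I" "q \<in> FA I"
    using lm l'm' by (simp_all add: p_def q_def Fop_FA Fcst_FA)
  have "eqset I p q = S \<inter> S'"
    using c by (auto simp: lm(4) l'm'(4) p_def q_def eqset_def Fop_switch Fcst_def split: if_splits)
  moreover have "\<phi> p = \<phi> q"
    using hom_switch_eq[of I L \<phi> l m l' "Fcst I c0"] hom_switch_eq[of I L \<phi> l m m' "Fcst I c1"]
      H lm l'm' Fcst_FA[of I c0] Fcst_FA[of I c1] by (simp add: p_def q_def)
  ultimately show "S \<inter> S' \<in> kernel_eqsets I \<phi>"
    unfolding kernel_eqsets_def using pq by blast
next
  fix S S' assume "S \<in> kernel_eqsets I \<phi>" and S': "S' \<in> BA I" and "S \<subseteq> S'"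
  then obtain l m where lm: "l \<in> FA I" "m \<in> FA I" "\<phi> l = \<phi> m" "eqset I l m \<subseteq> S'"
    unfolding kernel_eqsets_def by blast
  let ?\<chi> = "restrict (\<lambda>u. if u \<in> S' then c0 else c1) (cube I)"
  have \<chi>: "?\<chi> \<in> FA I" "eqset I ?\<chi> (Fcst I c0) = S'"
    using BA_eq_eqset_indicator[OF c S'] by simp_all
  then have "\<phi> ?\<chi> = \<phi> (Fcst I c0)"
    using hom_eq_if_eqset_subset[of I L \<phi> l m ?\<chi> "Fcst I c0"] H lm Fcst_FA[of I c0] by simp
  with \<chi> show "S' \<in> kernel_eqsets I \<phi>"
    unfolding kernel_eqsets_def using Fcst_FA[of I c0] by blast
qed

text \<open>Every set of BA I is an equaliser against a constant, so a family Z \<subseteq> BA I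
  is determined by which equalisers it contains.\<close>
lemma kernel_eqsets_unique:
  fixes c0 c1 :: 'a and \<phi> :: "(('i \<Rightarrow> 'a) \<Rightarrow> 'a) \<Rightarrow> 'l"
  assumes c: "c0 \<noteq> c1" and H: "is_hom_F I L \<phi>" and Z: "Z \<subseteq> BA I"
    and Z_iff: "\<forall>l\<in>FA I. \<forall>m\<in>FA I. \<phi> l = \<phi> m \<longleftrightarrow> eqset I l m \<in> Z"
  shows "Z = kernel_eqsets I \<phi>"
proof (intro equalityI subsetI)
  fix S assume "S \<in> Z"
  let ?\<chi> = "restrict (\<lambda>u. if u \<in> S then c0 else c1) (cube I)"
  have \<chi>: "?\<chi> \<in> FA I" "eqset I ?\<chi> (Fcst I c0) = S"
    using BA_eq_eqset_indicator[OF c] Z \<open>S \<in> Z\<close> by blast+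
  with \<open>S \<in> Z\<close> Z_iff Fcst_FA[of I c0] have "\<phi> ?\<chi> = \<phi> (Fcst I c0)" by metis
  with \<chi> show "S \<in> kernel_eqsets I \<phi>"
    unfolding kernel_eqsets_def using Fcst_FA[of I c0] by blast
next
  fix S assume "S \<in> kernel_eqsets I \<phi>"
  with Z_iff show "S \<in> Z" unfolding kernel_eqsets_def by blast
qed

lemma Zf_eq_kernel_eqsets:
  fixes c0 c1 :: 'a and L :: "('a, 'l) osig_alg" and I :: "'i set"
  assumes c: "c0 \<noteq> c1" and V: "in_V_Omega L" and \<alpha>: "\<alpha> \<in> I \<rightarrow> ocarrier L"
  shows "Zf I L \<alpha> = kernel_eqsets I (phi I L \<alpha>)"
  unfolding Zf_def
proof (rule the_equality)
  have H: "is_hom_F I L (phi I L \<alpha>)" using V \<alpha> by (rule phi_is_hom)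
  show "is_filter_on (BA I) (cube I) (kernel_eqsets I (phi I L \<alpha>)) \<and>
      (\<forall>l\<in>FA I. \<forall>m\<in>FA I. phi I L \<alpha> l = phi I L \<alpha> m \<longleftrightarrow> eqset I l m \<in> kernel_eqsets I (phi I L \<alpha>))"
    using kernel_eqsets_filter[OF c H] by (simp add: kernel_eqsets_iff[OF H])
  fix Z assume Z: "is_filter_on (BA I) (cube I) Z \<and>
      (\<forall>l\<in>FA I. \<forall>m\<in>FA I. phi I L \<alpha> l = phi I L \<alpha> m \<longleftrightarrow> eqset I l m \<in> Z)"
  then have "Z \<subseteq> BA I" by (simp add: is_filter_on_def)
  with Z show "Z = kernel_eqsets I (phi I L \<alpha>)"
    using kernel_eqsets_unique[OF c H] by blast
qed

lemma cls_eq: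
  fixes c0 c1 :: 'a and L :: "('a, 'l) osig_alg" and I :: "'i set"
  assumes "c0 \<noteq> c1" "in_V_Omega L" "\<alpha> \<in> I \<rightarrow> ocarrier L" "l \<in> FA I"
  shows "cls I L \<alpha> l = {m \<in> FA I. phi I L \<alpha> m = phi I L \<alpha> l}"
  using assms Zf_eq_kernel_eqsets[OF assms(1-3)] kernel_eqsets_iff[OF phi_is_hom[OF assms(2,3)]]
  by (auto simp: cls_def Zrel_def)

lemma iota_cls:
  fixes c0 c1 :: 'a and L :: "('a, 'l) osig_alg" and I :: "'i set"
  assumes "c0 \<noteq> c1" "in_V_Omega L" "\<alpha> \<in> I \<rightarrow> ocarrier L" "l \<in> FA I"
  shows "iota I L \<alpha> (cls I L \<alpha> l) = phi I L \<alpha> l"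
proof -
  have "phi I L \<alpha> ` cls I L \<alpha> l = {phi I L \<alpha> l}"
    using cls_eq[OF assms] assms(4) by auto
  then show ?thesis by (simp add: iota_def)
qed

section \<open>Composition with a uniformly continuous map\<close>

lemma unif_cont_component_FA:
  fixes f :: "('i \<Rightarrow> 'a) \<Rightarrow> 'j \<Rightarrow> 'a"
  assumes uc: "unif_cont I J f" and j: "j \<in> J"
  shows "restrict (\<lambda>u. f u j) (cube I) \<in> FA I"
proof -
  have "coarser (coord_part J [j]) (coord_part J [j] :: ('j \<Rightarrow> 'a) set set)"
    by (auto simp: coarser_def)
  then have "(coord_part J [j] :: ('j \<Rightarrow> 'a) set set) \<in> PF J"
    unfolding PF_def using j coord_part_partition by (intro CollectI conjI exI[of _ "[j]"]) auto
  then have "preim_part f (cube I) (coord_part J [j]) \<in> PF I"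
    using uc unfolding unif_cont_def by blast
  then obtain ks where ks: "set ks \<subseteq> I" "coarser (preim_part f (cube I) (coord_part J [j])) (coord_part I ks)"
    unfolding PF_def by blast
  have "determined_by I (restrict (\<lambda>u. f u j) (cube I)) ks"
    unfolding determined_by_def
  proof (intro ballI impI)
    fix u v :: "'i \<Rightarrow> 'a" assume uv: "u \<in> cube I" "v \<in> cube I" "\<forall>i\<in>set ks. u i = v i"
    with ks(2) obtain C where C: "C \<in> preim_part f (cube I) (coord_part J [j])" "u \<in> C" "v \<in> C"
      by (rule coarser_coord_part_same_block)
    then obtain w where "C = f -` {x \<in> cube J. x j = w j} \<inter> cube I"
      unfolding preim_part_def coord_part_def by auto
    with C uv(1,2) show "restrict (\<lambda>u. f u j) (cube I) u = restrict (\<lambda>u. f u j) (cube I) v"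
      by simp
  qed
  with ks(1) show ?thesis unfolding FA_iff by auto
qed

lemma restrict_comp_represents:
  fixes f :: "('i \<Rightarrow> 'a) \<Rightarrow> 'j \<Rightarrow> 'a"
  assumes f: "f \<in> cube I \<rightarrow> cube J" and t: "represents J t m"
  shows "restrict (m \<circ> f) (cube I) = veval (Falg I) (\<lambda>j. restrict (\<lambda>u. f u j) (cube I)) t"
proof (rule extensionalityI[of _ "cube I"])
  show "veval (Falg I) (\<lambda>j. restrict (\<lambda>u. f u j) (cube I)) t \<in> extensional (cube I)"
    by (cases t) (simp_all only: veval.simps Falg_simps Fcst_def Fop_def restrict_extensional)
  fix u :: "'i \<Rightarrow> 'a" assume u: "u \<in> cube I"
  then have "restrict (m \<circ> f) (cube I) u = veval Omega (f u) t"
    using represents_apply[OF t] f by auto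
  also have "\<dots> = veval (Falg I) (\<lambda>j. restrict (\<lambda>u. f u j) (cube I)) t u"
    using u by (simp add: veval_Falg_apply)
  finally show "restrict (m \<circ> f) (cube I) u = veval (Falg I) (\<lambda>j. restrict (\<lambda>u. f u j) (cube I)) t u" .
qed simp

text \<open>Both sides evaluate a term representing h.\<close>
lemma ovl_eq_phi:
  fixes L :: "('a, 'l) osig_alg" and I :: "'i set"
  assumes V: "in_V_Omega L" and \<alpha>: "\<alpha> \<in> I \<rightarrow> ocarrier L" and h: "h \<in> FA I"
  shows "ovl I L h \<alpha> = phi I L \<alpha> h"
proof -
  let ?Q = "\<lambda>y. (\<exists>c. h = Fcst I c \<and> y = cst L c) \<or>
     (\<exists>n r ks. op_sym n r \<and> length ks = n \<and> set ks \<subseteq> I \<and>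
        h = Fop I n r (map (proj I) ks) \<and> y = opr L n r (map \<alpha> ks))"
  have unique: "y = phi I L \<alpha> h" if "?Q y" for y
    using that
  proof (elim disjE exE conjE)
    fix c assume "h = Fcst I c" "y = cst L c"
    with phi_represents[OF V \<alpha> represents_Cst] show ?thesis by simp
  next
    fix n r ks assume nrks: "op_sym n r" "length ks = n" "set ks \<subseteq> I"
      "h = Fop I n r (map (proj I) ks)" "y = opr L n r (map \<alpha> ks)"
    with phi_represents[OF V \<alpha> represents_flat[OF nrks(1-3)]] show ?thesis
      by (simp add: comp_def)
  qed
  from h have "\<exists>y. ?Q y" by (cases rule: FA_cases) blast+
  then have "?Q (SOME y. ?Q y)" by (rule someI_ex)
  then show ?thesis unfolding ovl_def by (rule unique)
qed

lemma phi_comp_unif_cont: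
  fixes L :: "('a, 'l) osig_alg" and I :: "'i set" and J :: "'j set"
    and f :: "('i \<Rightarrow> 'a) \<Rightarrow> 'j \<Rightarrow> 'a"
  assumes V: "in_V_Omega L" and uc: "unif_cont I J f"
    and \<alpha>: "\<alpha> \<in> I \<rightarrow> ocarrier L" and \<beta>: "\<beta> \<in> J \<rightarrow> ocarrier L"
    and \<beta>_eq: "\<forall>j\<in>J. \<beta> j = ovlF I J L f \<alpha> j" and m: "m \<in> FA J"
  shows "restrict (m \<circ> f) (cube I) \<in> FA I"
    and "phi I L \<alpha> (restrict (m \<circ> f) (cube I)) = phi J L \<beta> m"
proof -
  define g where "g = (\<lambda>j. restrict (\<lambda>u. f u j) (cube I))"
  have g: "\<forall>j\<in>J. g j \<in> FA I"
    using unif_cont_component_FA[OF uc] by (simp add: g_def)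
  have phi_g: "phi I L \<alpha> (g j) = \<beta> j" if "j \<in> J" for j
    using \<beta>_eq that ovl_eq_phi[OF V \<alpha>] g by (simp add: ovlF_def g_def)
  obtain t where t: "represents J t m" using m by (rule FA_represented)
  then have t_wf: "wf_vterm t" "vterm_vars t \<subseteq> J" by (simp_all add: represents_def)
  have "f \<in> cube I \<rightarrow> cube J" using uc by (simp add: unif_cont_def)
  then have mf: "restrict (m \<circ> f) (cube I) = veval (Falg I) g t"
    unfolding g_def using t by (rule restrict_comp_represents)
  show "restrict (m \<circ> f) (cube I) \<in> FA I"
    unfolding mf using t_wf g by (auto intro!: veval_Falg_FA)
  have "phi I L \<alpha> (veval (Falg I) g t) = veval L (\<lambda>j. phi I L \<alpha> (g j)) t"
    using phi_is_hom[OF V \<alpha>] t_wf g by (auto intro!: veval_hom)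
  also have "\<dots> = veval L \<beta> t"
    using t_wf phi_g by (auto intro!: veval_cong)
  also have "\<dots> = phi J L \<beta> m"
    using phi_represents[OF V \<beta> t] by simp
  finally show "phi I L \<alpha> (restrict (m \<circ> f) (cube I)) = phi J L \<beta> m"
    unfolding mf .
qed

lemma phi_in_gen_sub:
  fixes L :: "('a, 'l) osig_alg" and J :: "'j set"
  assumes V: "in_V_Omega L" and \<beta>: "\<beta> \<in> J \<rightarrow> ocarrier L" and m: "m \<in> FA J"
  shows "phi J L \<beta> m \<in> gen_sub L (\<beta> ` J)"
proof -
  obtain t where t: "represents J t m" using m by (rule FA_represented)
  have "veval L \<beta> t \<in> S"
    if "\<beta> ` J \<subseteq> S" "\<forall>a. cst L a \<in> S"
      "\<forall>n h xs. op_sym n h \<and> length xs = n \<and> set xs \<subseteq> S \<longrightarrow> opr L n h xs \<in> S" for S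
    using that t by (intro veval_closed) (auto simp: represents_def image_subset_iff)
  then show ?thesis
    using phi_represents[OF V \<beta> t] by (auto simp: gen_sub_def)
qed

lemma fquot_map_cls:
  fixes c0 c1 :: 'a and L :: "('a, 'l) osig_alg" and I :: "'i set" and J :: "'j set"
    and f :: "('i \<Rightarrow> 'a) \<Rightarrow> 'j \<Rightarrow> 'a"
  assumes c: "c0 \<noteq> c1" and V: "in_V_Omega L" and uc: "unif_cont I J f"
    and \<alpha>: "\<alpha> \<in> I \<rightarrow> ocarrier L" and \<beta>: "\<beta> \<in> J \<rightarrow> ocarrier L"
    and \<beta>_eq: "\<forall>j\<in>J. \<beta> j = ovlF I J L f \<alpha> j" and l: "l \<in> FA J"
  shows "fquot_map I J L \<alpha> \<beta> f (cls J L \<beta> l) = cls I L \<alpha> (restrict (l \<circ> f) (cube I))"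
proof -
  note comp = phi_comp_unif_cont[OF V uc \<alpha> \<beta> \<beta>_eq]
  have "cls I L \<alpha> (restrict (m \<circ> f) (cube I)) = cls I L \<alpha> (restrict (l \<circ> f) (cube I))"
    if "m \<in> cls J L \<beta> l" for m
  proof -
    have "m \<in> FA J" "phi J L \<beta> m = phi J L \<beta> l"
      using that cls_eq[OF c V \<beta> l] by auto
    with comp l show ?thesis by (simp add: cls_eq[OF c V \<alpha>])
  qed
  moreover have "l \<in> cls J L \<beta> l" using cls_eq[OF c V \<beta> l] l by simp
  ultimately have "(\<lambda>m. cls I L \<alpha> (restrict (m \<circ> f) (cube I))) ` cls J L \<beta> l
      = {cls I L \<alpha> (restrict (l \<circ> f) (cube I))}"
    by blast
  then show ?thesis by (simp add: fquot_map_def)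
qed

theorem mainTheorem8:
  fixes L :: "('a, 'l) osig_alg" and I :: "'i set" and J :: "'j set"
    and f :: "('i \<Rightarrow> 'a) \<Rightarrow> ('j \<Rightarrow> 'a)" and \<alpha> :: "'i \<Rightarrow> 'l" and \<beta> :: "'j \<Rightarrow> 'l"
  assumes "infinite (UNIV :: 'a set)"
    and "in_V_Omega L"
    and "unif_cont I J f"
    and "\<alpha> \<in> I \<rightarrow> ocarrier L"
    and "\<beta> \<in> J \<rightarrow> ocarrier L"
    and "\<forall>j\<in>J. \<beta> j = ovlF I J L f \<alpha> j"
  shows "\<forall>X \<in> Fquot J L \<beta>.
           incl L (\<beta> ` J) (iota J L \<beta> X) = iota I L \<alpha> (fquot_map I J L \<alpha> \<beta> f X)"
proof
  note V = assms(2) and \<alpha> = assms(4) and \<beta> = assms(5)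
  obtain c1 :: 'a where "c1 \<notin> {undefined}"
    using ex_new_if_finite[OF assms(1)] by blast
  then have c: "undefined \<noteq> c1" by blast
  fix X assume "X \<in> Fquot J L \<beta>"
  then obtain l where l: "l \<in> FA J" and X: "X = cls J L \<beta> l"
    unfolding Fquot_def cls_def by (rule quotientE)
  have "incl L (\<beta> ` J) (iota J L \<beta> X) = phi J L \<beta> l"
    using iota_cls[OF c V \<beta> l] phi_in_gen_sub[OF V \<beta> l] by (simp add: X incl_def)
  also have "\<dots> = phi I L \<alpha> (restrict (l \<circ> f) (cube I))"
    using phi_comp_unif_cont[OF V assms(3) \<alpha> \<beta> assms(6) l] by simp
  also have "\<dots> = iota I L \<alpha> (fquot_map I J L \<alpha> \<beta> f X)"
    using fquot_map_cls[OF c V assms(3) \<alpha> \<beta> assms(6) l] iota_cls[OF c V \<alpha>]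
      phi_comp_unif_cont(1)[OF V assms(3) \<alpha> \<beta> assms(6) l] by (simp add: X)
  finally show "incl L (\<beta> ` J) (iota J L \<beta> X) = iota I L \<alpha> (fquot_map I J L \<alpha> \<beta> f X)" .
qed

end
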